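(* Let $(\mathcal{S},\mathcal{A},P,r)$ be an MDP with finite state and action spaces and $r\in[0,1]$, let $\gamma\in(0,1)$, and let $\pi$ be a stationary policy whose gain $\rho^\pi$ is a constant vector. Then $\|\frac1{1-\gamma}\rho^\pi-V^\pi_\gamma\|_\infty\le\|h^\pi\|_{\mathrm{sp}}$ and $\|V^\pi_\gamma\|_{\mathrm{sp}}\le2\|h^\pi\|_{\mathrm{sp}}$.
   Context: $V^\pi_\gamma(s)=\mathbb{E}^\pi_s[\sum_{t\ge0}\gamma^tr(S_t,A_t)]$. Gain $\rho^\pi(s)=\lim_T\frac1T\mathbb{E}^\pi_s[\sum_{t<T}r(S_t,A_t)]$; bias $h^\pi(s)=\mathrm{C}\text{-}\lim_T\mathbb{E}^\pi_s[\sum_{t<T}(r(S_t,A_t)-\rho^\pi(S_t))]$ (Cesàro limit). $\|x\|_{\mathrm{sp}}=\max_sx(s)-\min_sx(s)$. *)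

theory Defs
  imports "HOL-Analysis.Analysis"
begin

definition stochastic_kernel :: "('s::finite \<Rightarrow> 'a::finite \<Rightarrow> 's \<Rightarrow> real) \<Rightarrow> bool" where
  "stochastic_kernel P \<longleftrightarrow> (\<forall>s a s'. 0 \<le> P s a s') \<and> (\<forall>s a. (\<Sum>s'\<in>UNIV. P s a s') = 1)"

definition stationary_policy :: "('s::finite \<Rightarrow> 'a::finite \<Rightarrow> real) \<Rightarrow> bool" where
  "stationary_policy pol \<longleftrightarrow> (\<forall>s a. 0 \<le> pol s a) \<and> (\<forall>s. (\<Sum>a\<in>UNIV. pol s a) = 1)"

text \<open>Probability that S_t = s' when starting in s and following pol.\<close>
fun state_dist :: "('s::finite \<Rightarrow> 'a::finite \<Rightarrow> 's \<Rightarrow> real) \<Rightarrow> ('s \<Rightarrow> 'a \<Rightarrow> real) \<Rightarrow> nat \<Rightarrow> 's \<Rightarrow> 's \<Rightarrow> real" where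
  "state_dist P pol 0 s s' = (if s' = s then 1 else 0)"
| "state_dist P pol (Suc n) s s' =
     (\<Sum>u\<in>UNIV. state_dist P pol n s u * (\<Sum>a\<in>UNIV. pol u a * P u a s'))"

text \<open>E^pol_s [ f(S_t, A_t) ].\<close>
definition expect_at :: "('s::finite \<Rightarrow> 'a::finite \<Rightarrow> 's \<Rightarrow> real) \<Rightarrow> ('s \<Rightarrow> 'a \<Rightarrow> real) \<Rightarrow> ('s \<Rightarrow> 'a \<Rightarrow> real) \<Rightarrow> nat \<Rightarrow> 's \<Rightarrow> real" where
  "expect_at P pol f t s = (\<Sum>s'\<in>UNIV. state_dist P pol t s s' * (\<Sum>a\<in>UNIV. pol s' a * f s' a))"

definition disc_value :: "('s::finite \<Rightarrow> 'a::finite \<Rightarrow> 's \<Rightarrow> real) \<Rightarrow> ('s \<Rightarrow> 'a \<Rightarrow> real) \<Rightarrow> ('s \<Rightarrow> 'a \<Rightarrow> real) \<Rightarrow> real \<Rightarrow> 's \<Rightarrow> real" where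
  "disc_value P r pol \<gamma> s = (\<Sum>t. \<gamma> ^ t * expect_at P pol r t s)"

definition gain :: "('s::finite \<Rightarrow> 'a::finite \<Rightarrow> 's \<Rightarrow> real) \<Rightarrow> ('s \<Rightarrow> 'a \<Rightarrow> real) \<Rightarrow> ('s \<Rightarrow> 'a \<Rightarrow> real) \<Rightarrow> 's \<Rightarrow> real" where
  "gain P r pol s = lim (\<lambda>T. (\<Sum>t<T. expect_at P pol r t s) / real T)"

definition cesaro_lim :: "(nat \<Rightarrow> real) \<Rightarrow> real" where
  "cesaro_lim x = lim (\<lambda>N. (\<Sum>T=1..N. x T) / real N)"

definition bias :: "('s::finite \<Rightarrow> 'a::finite \<Rightarrow> 's \<Rightarrow> real) \<Rightarrow> ('s \<Rightarrow> 'a \<Rightarrow> real) \<Rightarrow> ('s \<Rightarrow> 'a \<Rightarrow> real) \<Rightarrow> 's \<Rightarrow> real" where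
  "bias P r pol s = cesaro_lim (\<lambda>T. \<Sum>t<T.
      expect_at P pol (\<lambda>s' a. r s' a - gain P r pol s') t s)"

definition sup_norm :: "('s::finite \<Rightarrow> real) \<Rightarrow> real" where
  "sup_norm x = Max (range (\<lambda>s. \<bar>x s\<bar>))"

definition span_norm :: "('s::finite \<Rightarrow> real) \<Rightarrow> real" where
  "span_norm x = Max (range x) - Min (range x)"

end

theory Submission
  imports Defs
begin

(* Let P\<^sub>\<pi> be the transition matrix of the policy and r\<^sub>\<pi> its mean reward.  Since the powers of a
   stochastic matrix are bounded, the mean ergodic theorem splits every vector as k + (w - P\<^sub>\<pi> w)
   with P\<^sub>\<pi> k = k.  Applied to r\<^sub>\<pi> it identifies the gain with k; applied once more to w it
   identifies the bias h, which then satisfies the Poisson equation r\<^sub>\<pi> = \<rho> + h - P\<^sub>\<pi> h.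
   Summing this against \<gamma>^t telescopes to
     V\<^sub>\<gamma> = \<rho> / (1 - \<gamma>) + h - (1 - \<gamma>) \<Sum>\<^sub>t \<gamma>^t P\<^sub>\<pi>^(t+1) h,
   and the last term is a weighted average of values of h, so it lies in [min h, max h]. *)

lemma cesaro_average_coboundary:
  fixes T :: "'v::real_vector \<Rightarrow> 'v"
  assumes lin: "linear T"
  shows "v - (1 / real (Suc N)) *\<^sub>R (\<Sum>t\<le>N. (T ^^ t) v) \<in> range (\<lambda>x. x - T x)"
proof -
  have sub: "subspace (range (\<lambda>x. x - T x))"
    by (intro linear_subspace_image module_hom_sub lin subspace_UNIV) (simp add: linear_id[unfolded id_def])
  have "v - (T ^^ t) v \<in> range (\<lambda>x. x - T x)" for t
  proof
    show "v - (T ^^ t) v = (\<Sum>s<t. (T ^^ s) v) - T (\<Sum>s<t. (T ^^ s) v)"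
      using sum_lessThan_telescope'[of "\<lambda>s. (T ^^ s) v" t]
      by (simp add: linear_sum[OF lin] sum_subtractf[symmetric])
  qed simp
  then have "(1 / real (Suc N)) *\<^sub>R (\<Sum>t\<le>N. v - (T ^^ t) v) \<in> range (\<lambda>x. x - T x)"
    by (intro subspace_scale[OF sub] subspace_sum[OF sub])
  then show ?thesis
    by (simp add: sum_subtractf scaleR_diff_right sum_constant_scaleR)
qed

lemma cesaro_average_almost_fixed:
  fixes T :: "'v::real_normed_vector \<Rightarrow> 'v"
  assumes lin: "linear T" and B: "\<And>n. norm ((T ^^ n) v) \<le> B"
  shows "(\<lambda>N. T ((1 / real (Suc N)) *\<^sub>R (\<Sum>t\<le>N. (T ^^ t) v))
      - (1 / real (Suc N)) *\<^sub>R (\<Sum>t\<le>N. (T ^^ t) v)) \<longlonglongrightarrow> 0"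
proof -
  define A where "A N = (1 / real (Suc N)) *\<^sub>R (\<Sum>t\<le>N. (T ^^ t) v)" for N
  have "T (A N) - A N = (1 / real (Suc N)) *\<^sub>R ((T ^^ Suc N) v - v)" for N
    using sum_lessThan_telescope[of "\<lambda>t. (T ^^ t) v" "Suc N"]
    by (simp add: A_def linear_scale[OF lin] linear_sum[OF lin] scaleR_diff_right[symmetric]
        sum_subtractf[symmetric] lessThan_Suc_atMost[symmetric] del: sum.lessThan_Suc)
  moreover have "norm ((T ^^ Suc N) v - v) \<le> 2 * B" for N
    using norm_triangle_ineq4[of "(T ^^ Suc N) v" v] B[of "Suc N"] B[of 0] by simp
  ultimately have "\<forall>N. norm (T (A N) - A N) \<le> 2 * B / real (Suc N)"
    by (simp add: divide_right_mono)
  moreover have "(\<lambda>N. 2 * B / real (Suc N)) \<longlonglongrightarrow> 0"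
    using LIMSEQ_Suc[OF lim_const_over_n[of "2 * B"]] by simp
  ultimately have "(\<lambda>N. T (A N) - A N) \<longlonglongrightarrow> 0"
    by (rule Lim_null_comparison[OF always_eventually])
  then show ?thesis
    by (simp add: A_def)
qed

lemma mean_ergodic_decomposition:
  fixes T :: "'v::euclidean_space \<Rightarrow> 'v"
  assumes lin: "linear T" and bnd: "bounded (range (\<lambda>n. (T ^^ n) v))"
  shows "\<exists>k w. T k = k \<and> v = k + (w - T w)"
proof -
  define A where "A N = (1 / real (Suc N)) *\<^sub>R (\<Sum>t\<le>N. (T ^^ t) v)" for N
  obtain B where B: "\<And>n. norm ((T ^^ n) v) \<le> B"
    using bnd by (auto simp: bounded_iff)
  have "norm (\<Sum>t\<le>N. (T ^^ t) v) \<le> real (Suc N) * B" for N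
    using sum_norm_le[of "{..N}" "\<lambda>t. (T ^^ t) v" "\<lambda>_. B"] B by simp
  then have "norm (A N) \<le> B" for N
    by (simp add: A_def field_simps)
  then have "bounded (range A)"
    by (auto simp: bounded_iff)
  then obtain k \<sigma> where \<sigma>: "strict_mono \<sigma>" and k: "(A \<circ> \<sigma>) \<longlonglongrightarrow> k"
    using bounded_imp_convergent_subsequence by blast
  have "(\<lambda>N. T (A N) - A N) \<longlonglongrightarrow> 0"
    unfolding A_def using lin B by (rule cesaro_average_almost_fixed)
  from LIMSEQ_subseq_LIMSEQ[OF this \<sigma>]
  have "(\<lambda>N. T (A (\<sigma> N)) - A (\<sigma> N)) \<longlonglongrightarrow> 0"
    by (simp add: o_def)
  moreover have "(\<lambda>N. T (A (\<sigma> N)) - A (\<sigma> N)) \<longlonglongrightarrow> T k - k"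
    using k lin unfolding o_def linear_conv_bounded_linear
    by (intro tendsto_diff bounded_linear.tendsto[of T])
  ultimately have "T k = k"
    using LIMSEQ_unique by fastforce
  have "(\<lambda>N. v - A (\<sigma> N)) \<longlonglongrightarrow> v - k"
    using k unfolding o_def by (intro tendsto_diff tendsto_const)
  moreover have "closed (range (\<lambda>x. x - T x))"
    by (intro closed_subspace linear_subspace_image module_hom_sub lin subspace_UNIV)
      (simp add: linear_id[unfolded id_def])
  moreover have "v - A N \<in> range (\<lambda>x. x - T x)" for N
    unfolding A_def by (rule cesaro_average_coboundary[OF lin])
  ultimately have "v - k \<in> range (\<lambda>x. x - T x)"
    by (intro Lim_in_closed_set) auto
  then obtain w where "v = k + (w - T w)"
    by (auto simp: algebra_simps)
  with \<open>T k = k\<close> show ?thesis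
    by blast
qed

lemma LIMSEQ_linear_plus_bounded_div:
  fixes e :: "nat \<Rightarrow> real"
  assumes "\<And>n. \<bar>e n\<bar> \<le> B"
  shows "(\<lambda>n. (real n * c + e n) / real n) \<longlonglongrightarrow> c"
proof -
  have "(\<lambda>n. e n / real n) \<longlonglongrightarrow> 0"
  proof (rule Lim_null_comparison)
    show "\<forall>\<^sub>F n in sequentially. norm (e n / real n) \<le> B / real n"
      using assms by (intro always_eventually allI) (simp add: divide_right_mono)
  qed (rule lim_const_over_n)
  then have "(\<lambda>n. c + e n / real n) \<longlonglongrightarrow> c"
    using tendsto_add[OF tendsto_const] by fastforce
  moreover have "\<forall>\<^sub>F n in sequentially. c + e n / real n = (real n * c + e n) / real n"
    by (intro eventually_sequentiallyI[of 1]) (simp add: field_simps)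
  ultimately show ?thesis by (rule Lim_transform_eventually)
qed

lemma discounted_telescope_sums:
  fixes a :: "nat \<Rightarrow> real"
  assumes "\<bar>\<gamma>\<bar> < 1" and "\<And>t. \<bar>a t\<bar> \<le> B"
  shows "(\<lambda>t. \<gamma> ^ t * (a t - a (Suc t))) sums (a 0 - (1 - \<gamma>) * (\<Sum>t. \<gamma> ^ t * a (Suc t)))"
proof -
  have "summable (\<lambda>t. \<gamma> ^ t * a (Suc t))"
  proof (rule summable_comparison_test)
    show "\<exists>N. \<forall>t\<ge>N. norm (\<gamma> ^ t * a (Suc t)) \<le> \<bar>\<gamma>\<bar> ^ t * B"
      using assms(2) by (auto simp: abs_mult power_abs intro!: mult_left_mono)
    show "summable (\<lambda>t. \<bar>\<gamma>\<bar> ^ t * B)"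
      using assms(1) by (simp add: summable_mult2)
  qed
  then obtain S where S: "(\<lambda>t. \<gamma> ^ t * a (Suc t)) sums S"
    by (auto simp: summable_def)
  then have "(\<lambda>t. \<gamma> ^ Suc t * a (Suc t)) sums (\<gamma> * S)"
    by (simp add: sums_mult mult.assoc)
  then have "(\<lambda>t. \<gamma> ^ t * a t) sums (\<gamma> * S + a 0)"
    using sums_Suc_iff[of "\<lambda>t. \<gamma> ^ t * a t"] by simp
  from sums_diff[OF this S] have "(\<lambda>t. \<gamma> ^ t * (a t - a (Suc t))) sums (a 0 - (1 - \<gamma>) * S)"
    by (simp add: algebra_simps)
  with S show ?thesis by (simp add: sums_iff)
qed

lemma discounted_average_mem_Icc:
  fixes a :: "nat \<Rightarrow> real"
  assumes "0 \<le> \<gamma>" "\<gamma> < 1" and "\<And>t. a t \<in> {m..M}"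
  shows "(1 - \<gamma>) * (\<Sum>t. \<gamma> ^ t * a t) \<in> {m..M}"
proof -
  have geom: "(\<lambda>t. \<gamma> ^ t * c) sums (c / (1 - \<gamma>))" for c
    using sums_mult2[OF geometric_sums, of \<gamma> c] assms(1,2) by simp
  have "norm (\<gamma> ^ t * a t) \<le> \<gamma> ^ t * (\<bar>m\<bar> + \<bar>M\<bar>)" for t
    using assms(1) assms(3)[of t] by (auto simp: abs_mult intro!: mult_left_mono)
  then have "summable (\<lambda>t. \<gamma> ^ t * a t)"
    by (intro summable_comparison_test[OF _ sums_summable[OF geom]]) auto
  then have sums_a: "(\<lambda>t. \<gamma> ^ t * a t) sums (\<Sum>t. \<gamma> ^ t * a t)"
    by (rule summable_sums)
  have "m / (1 - \<gamma>) \<le> (\<Sum>t. \<gamma> ^ t * a t)"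
    by (rule sums_le[OF _ geom sums_a]) (use assms in \<open>auto intro: mult_left_mono\<close>)
  moreover have "(\<Sum>t. \<gamma> ^ t * a t) \<le> M / (1 - \<gamma>)"
    by (rule sums_le[OF _ sums_a geom]) (use assms in \<open>auto intro: mult_left_mono\<close>)
  ultimately show ?thesis
    using assms(2) by (simp add: field_simps)
qed

lemma sup_norm_le:
  assumes "\<And>s. \<bar>x s\<bar> \<le> B"
  shows "sup_norm x \<le> B"
  unfolding sup_norm_def using assms by (intro Max.boundedI) auto

lemma span_norm_le:
  assumes "\<And>s t. x s - x t \<le> B"
  shows "span_norm x \<le> B"
proof -
  have "Max (range x) \<in> range x" "Min (range x) \<in> range x"
    by simp_all
  then obtain s t where "Max (range x) = x s" "Min (range x) = x t"
    by blast
  then show ?thesis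
    unfolding span_norm_def using assms by simp
qed

lemma span_bounds_of_average_decomposition:
  fixes h :: "'s::finite \<Rightarrow> real"
  assumes V: "\<And>s. V s = C + h s - d s" and avg: "\<And>s. d s \<in> {Min (range h)..Max (range h)}"
  shows "sup_norm (\<lambda>s. C - V s) \<le> span_norm h \<and> span_norm V \<le> 2 * span_norm h"
proof -
  define lo where "lo = Min (range h)"
  define hi where "hi = Max (range h)"
  have span: "span_norm h = hi - lo"
    by (simp add: span_norm_def lo_def hi_def)
  have h: "h s \<in> {lo..hi}" and d: "d s \<in> {lo..hi}" for s
    using avg[of s] by (simp_all add: lo_def hi_def)
  have "\<bar>C - V s\<bar> \<le> span_norm h" for s
    using h[of s] d[of s] by (simp add: V span abs_le_iff)
  then have "sup_norm (\<lambda>s. C - V s) \<le> span_norm h"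
    by (rule sup_norm_le)
  moreover have "V s - V t \<le> 2 * span_norm h" for s t
    using h[of s] h[of t] d[of s] d[of t] by (simp add: V span)
  then have "span_norm V \<le> 2 * span_norm h"
    by (rule span_norm_le)
  ultimately show ?thesis ..
qed

definition stochastic_matrix :: "('s::finite \<Rightarrow> 's \<Rightarrow> real) \<Rightarrow> bool" where
  "stochastic_matrix Q \<longleftrightarrow> (\<forall>u s. 0 \<le> Q u s) \<and> (\<forall>u. (\<Sum>s\<in>UNIV. Q u s) = 1)"

definition markov_op :: "('s::finite \<Rightarrow> 's \<Rightarrow> real) \<Rightarrow> ('s \<Rightarrow> real) \<Rightarrow> 's \<Rightarrow> real" where
  "markov_op Q g u = (\<Sum>s\<in>UNIV. Q u s * g s)"

lemma markov_op_add: "markov_op Q (\<lambda>u. f u + g u) = (\<lambda>u. markov_op Q f u + markov_op Q g u)"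
  by (simp add: markov_op_def fun_eq_iff algebra_simps sum.distrib)

lemma markov_op_diff: "markov_op Q (\<lambda>u. f u - g u) = (\<lambda>u. markov_op Q f u - markov_op Q g u)"
  by (simp add: markov_op_def fun_eq_iff algebra_simps sum_subtractf)

lemma markov_op_const:
  assumes "stochastic_matrix Q"
  shows "markov_op Q (\<lambda>_. c) = (\<lambda>_. c)"
  using assms by (simp add: markov_op_def stochastic_matrix_def fun_eq_iff sum_distrib_right[symmetric])

lemma markov_op_mem_Icc:
  assumes "stochastic_matrix Q" and "\<And>s. g s \<in> {m..M}"
  shows "markov_op Q g u \<in> {m..M}"
proof -
  have "(\<Sum>s\<in>UNIV. Q u s * m) \<le> markov_op Q g u" "markov_op Q g u \<le> (\<Sum>s\<in>UNIV. Q u s * M)"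
    using assms unfolding markov_op_def stochastic_matrix_def
    by (auto intro!: sum_mono mult_left_mono)
  then show ?thesis
    using assms(1) by (simp add: stochastic_matrix_def sum_distrib_right[symmetric])
qed

lemma funpow_markov_op_mem_Icc:
  assumes "stochastic_matrix Q" and "\<And>s. g s \<in> {m..M}"
  shows "(markov_op Q ^^ n) g u \<in> {m..M}"
proof (induction n arbitrary: u)
  case 0
  show ?case using assms(2) by simp
next
  case (Suc n)
  show ?case using markov_op_mem_Icc[OF assms(1) Suc.IH] by simp
qed

lemma funpow_markov_op_abs_le:
  assumes "stochastic_matrix Q"
  shows "\<bar>(markov_op Q ^^ n) g u\<bar> \<le> sup_norm g"
proof -
  have g_le: "\<bar>g s\<bar> \<le> sup_norm g" for s
    unfolding sup_norm_def by (rule Max_ge) auto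
  have "g s \<in> {- sup_norm g..sup_norm g}" for s
    using g_le[of s] by (simp add: abs_le_iff)
  from funpow_markov_op_mem_Icc[where g=g and n=n and u=u, OF assms this] show ?thesis
    by (simp add: abs_le_iff)
qed

lemma funpow_markov_op_coboundary:
  assumes "markov_op Q k = k"
  shows "(markov_op Q ^^ n) (\<lambda>u. k u + w u - markov_op Q w u)
       = (\<lambda>u. k u + (markov_op Q ^^ n) w u - (markov_op Q ^^ Suc n) w u)"
  by (induction n) (simp_all add: assms markov_op_add markov_op_diff)

lemma markov_op_decomposition:
  fixes Q :: "'s::finite \<Rightarrow> 's \<Rightarrow> real"
  assumes "stochastic_matrix Q"
  shows "\<exists>k w. markov_op Q k = k \<and> g = (\<lambda>u. k u + w u - markov_op Q w u)"
proof -
  define T where "T x = (\<chi> u. markov_op Q (vec_nth x) u)" for x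
  have "linear T"
    by (rule linearI) (simp_all add: T_def markov_op_def vec_eq_iff sum.distrib algebra_simps sum_distrib_left)
  moreover have orbit: "(T ^^ n) (vec_lambda g) = vec_lambda ((markov_op Q ^^ n) g)" for n
    by (induction n) (simp_all add: T_def vec_lambda_inverse)
  have "norm ((T ^^ n) (vec_lambda g)) \<le> CARD('s) * sup_norm g" for n
  proof -
    have "norm ((T ^^ n) (vec_lambda g)) \<le> (\<Sum>u\<in>UNIV. \<bar>(markov_op Q ^^ n) g u\<bar>)"
      using norm_le_l1_cart[of "(T ^^ n) (vec_lambda g)"] by (simp add: orbit)
    also have "\<dots> \<le> CARD('s) * sup_norm g"
      using sum_bounded_above[of UNIV "\<lambda>u. \<bar>(markov_op Q ^^ n) g u\<bar>" "sup_norm g"]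
        funpow_markov_op_abs_le[OF assms] by simp
    finally show ?thesis .
  qed
  then have "bounded (range (\<lambda>n. (T ^^ n) (vec_lambda g)))"
    by (auto simp: bounded_iff)
  ultimately obtain k w where "T k = k" "vec_lambda g = k + (w - T w)"
    using mean_ergodic_decomposition by blast
  then have "markov_op Q (vec_nth k) = vec_nth k"
    and "g = (\<lambda>u. k $ u + w $ u - markov_op Q (vec_nth w) u)"
    by (auto simp: T_def vec_eq_iff fun_eq_iff)
  then show ?thesis by blast
qed

definition policy_matrix ::
    "('s::finite \<Rightarrow> 'a::finite \<Rightarrow> 's \<Rightarrow> real) \<Rightarrow> ('s \<Rightarrow> 'a \<Rightarrow> real) \<Rightarrow> 's \<Rightarrow> 's \<Rightarrow> real" where
  "policy_matrix P pol u s' = (\<Sum>a\<in>UNIV. pol u a * P u a s')"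

definition policy_mean :: "('s \<Rightarrow> 'a::finite \<Rightarrow> real) \<Rightarrow> ('s \<Rightarrow> 'a \<Rightarrow> real) \<Rightarrow> 's \<Rightarrow> real" where
  "policy_mean pol f u = (\<Sum>a\<in>UNIV. pol u a * f u a)"

lemma stochastic_matrix_policy_matrix:
  assumes "stochastic_kernel P" and "stationary_policy pol"
  shows "stochastic_matrix (policy_matrix P pol)"
  using assms unfolding stochastic_matrix_def stochastic_kernel_def stationary_policy_def policy_matrix_def
  by (auto intro!: sum_nonneg) (subst sum.swap; simp add: sum_distrib_left[symmetric])

lemma policy_mean_minus_const:
  assumes "stationary_policy pol"
  shows "policy_mean pol (\<lambda>s a. f s a - c) = (\<lambda>u. policy_mean pol f u - c)"
proof
  fix u
  have "policy_mean pol (\<lambda>s a. f s a - c) u = policy_mean pol f u - (\<Sum>a\<in>UNIV. pol u a) * c"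
    by (simp add: policy_mean_def right_diff_distrib sum_subtractf sum_distrib_right)
  then show "policy_mean pol (\<lambda>s a. f s a - c) u = policy_mean pol f u - c"
    using assms by (simp add: stationary_policy_def)
qed

lemma sum_state_dist_eq_funpow_markov_op:
  "(\<Sum>s'\<in>UNIV. state_dist P pol n s s' * g s') = (markov_op (policy_matrix P pol) ^^ n) g s"
proof (induction n arbitrary: g)
  case 0
  have delta: "(\<lambda>s'. state_dist P pol 0 s s' * g s') = (\<lambda>s'. if s' = s then g s else 0)"
    by auto
  show ?case by (subst delta) simp
next
  case (Suc n)
  let ?Q = "policy_matrix P pol"
  have "(\<Sum>s'\<in>UNIV. state_dist P pol (Suc n) s s' * g s')
      = (\<Sum>s'\<in>UNIV. \<Sum>u\<in>UNIV. state_dist P pol n s u * (?Q u s' * g s'))"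
    by (simp add: policy_matrix_def sum_distrib_right mult.assoc)
  also have "\<dots> = (\<Sum>u\<in>UNIV. state_dist P pol n s u * markov_op ?Q g u)"
    by (subst sum.swap) (simp add: markov_op_def sum_distrib_left)
  also have "\<dots> = (markov_op (policy_matrix P pol) ^^ Suc n) g s"
    by (simp only: Suc funpow_Suc_right o_apply)
  finally show ?case .
qed

lemma expect_at_eq_funpow_markov_op:
  "expect_at P pol f t s = (markov_op (policy_matrix P pol) ^^ t) (policy_mean pol f) s"
  unfolding expect_at_def policy_mean_def by (rule sum_state_dist_eq_funpow_markov_op)

locale policy_chain =
  fixes P :: "'s::finite \<Rightarrow> 'a::finite \<Rightarrow> 's \<Rightarrow> real" and pol :: "'s \<Rightarrow> 'a \<Rightarrow> real"
  assumes kernel: "stochastic_kernel P" and policy: "stationary_policy pol"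
begin

abbreviation P\<^sub>\<pi> :: "('s \<Rightarrow> real) \<Rightarrow> 's \<Rightarrow> real" where
  "P\<^sub>\<pi> \<equiv> markov_op (policy_matrix P pol)"

lemma stochastic: "stochastic_matrix (policy_matrix P pol)"
  using kernel policy by (rule stochastic_matrix_policy_matrix)

lemma sum_expect_at_coboundary:
  assumes "P\<^sub>\<pi> k = k" and "policy_mean pol f = (\<lambda>u. k u + w u - P\<^sub>\<pi> w u)"
  shows "(\<Sum>t<T. expect_at P pol f t s) = real T * k s + w s - (P\<^sub>\<pi> ^^ T) w s"
proof -
  have "(\<Sum>t<T. expect_at P pol f t s) = (\<Sum>t<T. k s + (P\<^sub>\<pi> ^^ t) w s - (P\<^sub>\<pi> ^^ Suc t) w s)"
    by (simp add: expect_at_eq_funpow_markov_op assms funpow_markov_op_coboundary del: funpow.simps)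
  also have "\<dots> = real T * k s + w s - (P\<^sub>\<pi> ^^ T) w s"
    using sum_lessThan_telescope'[of "\<lambda>t. (P\<^sub>\<pi> ^^ t) w s" T]
    by (simp add: sum.distrib sum_subtractf del: funpow.simps)
  finally show ?thesis .
qed

lemma gain_eq:
  assumes "P\<^sub>\<pi> k = k" and "policy_mean pol r = (\<lambda>u. k u + w u - P\<^sub>\<pi> w u)"
  shows "gain P r pol = k"
proof
  fix s
  have "\<bar>w s - (P\<^sub>\<pi> ^^ T) w s\<bar> \<le> \<bar>w s\<bar> + sup_norm w" for T
    using funpow_markov_op_abs_le[OF stochastic, of T w s] by linarith
  then show "gain P r pol s = k s"
    unfolding gain_def sum_expect_at_coboundary[OF assms] add_diff_eq[symmetric]
    by (intro limI LIMSEQ_linear_plus_bounded_div)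
qed

lemma bias_eq:
  assumes "gain P r pol = (\<lambda>_. c)" and "policy_mean pol r = (\<lambda>u. c + w u - P\<^sub>\<pi> w u)"
    and "P\<^sub>\<pi> k = k" and "w = (\<lambda>u. k u + v u - P\<^sub>\<pi> v u)"
  shows "bias P r pol = (\<lambda>u. w u - k u)"
proof
  fix s
  have "policy_mean pol (\<lambda>s a. r s a - gain P r pol s) = (\<lambda>u. 0 + w u - P\<^sub>\<pi> w u)"
    using assms(1,2) by (simp add: policy_mean_minus_const[OF policy])
  note partial_sum_w = sum_expect_at_coboundary[OF markov_op_const[OF stochastic] this]
  have orbit_w: "(P\<^sub>\<pi> ^^ T) w s = k s + (P\<^sub>\<pi> ^^ T) v s - (P\<^sub>\<pi> ^^ Suc T) v s" for T
    by (subst assms(4)) (simp only: funpow_markov_op_coboundary[OF assms(3)])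
  have partial_sum: "(\<Sum>t<T. expect_at P pol (\<lambda>s a. r s a - gain P r pol s) t s)
      = (w s - k s) + ((P\<^sub>\<pi> ^^ Suc T) v s - (P\<^sub>\<pi> ^^ T) v s)" for T
    using partial_sum_w[where T=T and s=s] orbit_w[of T] by simp
  \<comment> \<open>The partial sums need not converge, but the oscillating part telescopes under Cesaro averaging.\<close>
  have "(\<Sum>T=1..N. \<Sum>t<T. expect_at P pol (\<lambda>s a. r s a - gain P r pol s) t s)
      = real N * (w s - k s) + ((P\<^sub>\<pi> ^^ Suc N) v s - P\<^sub>\<pi> v s)" for N
    using sum_Suc_diff[of 1 N "\<lambda>T. (P\<^sub>\<pi> ^^ T) v s"] by (simp add: partial_sum sum.distrib)
  moreover have "\<bar>(P\<^sub>\<pi> ^^ Suc N) v s - P\<^sub>\<pi> v s\<bar> \<le> 2 * sup_norm v" for N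
    using funpow_markov_op_abs_le[OF stochastic, of "Suc N" v s]
      funpow_markov_op_abs_le[OF stochastic, of 1 v s]
    by simp
  ultimately show "bias P r pol s = w s - k s"
    unfolding bias_def cesaro_lim_def by (simp only:) (intro limI LIMSEQ_linear_plus_bounded_div)
qed

lemma policy_mean_poisson:
  assumes "gain P r pol = (\<lambda>_. c)"
  shows "policy_mean pol r = (\<lambda>u. c + bias P r pol u - P\<^sub>\<pi> (bias P r pol) u)"
proof -
  obtain k w where k: "P\<^sub>\<pi> k = k" and w: "policy_mean pol r = (\<lambda>u. k u + w u - P\<^sub>\<pi> w u)"
    using markov_op_decomposition[OF stochastic] by blast
  have "k = (\<lambda>_. c)"
    using gain_eq[OF k w] assms by simp
  with w have rw: "policy_mean pol r = (\<lambda>u. c + w u - P\<^sub>\<pi> w u)"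
    by simp
  obtain k' v where k': "P\<^sub>\<pi> k' = k'" and v: "w = (\<lambda>u. k' u + v u - P\<^sub>\<pi> v u)"
    using markov_op_decomposition[OF stochastic] by blast
  show ?thesis
    using k' by (simp add: rw bias_eq[OF assms rw k' v] markov_op_diff fun_eq_iff)
qed

lemma disc_value_eq:
  assumes "0 \<le> \<gamma>" "\<gamma> < 1" and "policy_mean pol r = (\<lambda>u. c + h u - P\<^sub>\<pi> h u)"
  shows "disc_value P r pol \<gamma> s = c / (1 - \<gamma>) + h s - (1 - \<gamma>) * (\<Sum>t. \<gamma> ^ t * (P\<^sub>\<pi> ^^ Suc t) h s)"
proof -
  have "\<gamma> ^ t * expect_at P pol r t s = c * \<gamma> ^ t + \<gamma> ^ t * ((P\<^sub>\<pi> ^^ t) h s - (P\<^sub>\<pi> ^^ Suc t) h s)" for t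
    by (simp add: expect_at_eq_funpow_markov_op assms(3) funpow_markov_op_coboundary
        markov_op_const[OF stochastic] algebra_simps del: funpow.simps)
  moreover have "(\<lambda>t. \<gamma> ^ t * ((P\<^sub>\<pi> ^^ t) h s - (P\<^sub>\<pi> ^^ Suc t) h s)) sums
      (h s - (1 - \<gamma>) * (\<Sum>t. \<gamma> ^ t * (P\<^sub>\<pi> ^^ Suc t) h s))"
    using discounted_telescope_sums[of \<gamma> "\<lambda>t. (P\<^sub>\<pi> ^^ t) h s" "sup_norm h"] assms(1,2)
      funpow_markov_op_abs_le[OF stochastic]
    by simp
  then have "(\<lambda>t. c * \<gamma> ^ t + \<gamma> ^ t * ((P\<^sub>\<pi> ^^ t) h s - (P\<^sub>\<pi> ^^ Suc t) h s)) sums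
      (c * (1 / (1 - \<gamma>)) + (h s - (1 - \<gamma>) * (\<Sum>t. \<gamma> ^ t * (P\<^sub>\<pi> ^^ Suc t) h s)))"
    using assms(1,2) by (intro sums_add sums_mult geometric_sums) auto
  ultimately show ?thesis
    unfolding disc_value_def by (simp add: sums_iff)
qed

end

theorem lemma25:
  fixes P :: "'s::finite \<Rightarrow> 'a::finite \<Rightarrow> 's \<Rightarrow> real"
    and r :: "'s \<Rightarrow> 'a \<Rightarrow> real"
    and pol :: "'s \<Rightarrow> 'a \<Rightarrow> real"
    and \<gamma> :: real
  assumes "stochastic_kernel P"
    and "\<And>s a. 0 \<le> r s a \<and> r s a \<le> 1"
    and "0 < \<gamma>" and "\<gamma> < 1"
    and "stationary_policy pol"
    and "\<exists>c. \<forall>s. gain P r pol s = c"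
  shows "sup_norm (\<lambda>s. gain P r pol s / (1 - \<gamma>) - disc_value P r pol \<gamma> s)
           \<le> span_norm (bias P r pol)
       \<and> span_norm (disc_value P r pol \<gamma>) \<le> 2 * span_norm (bias P r pol)"
proof -
  have chain: "policy_chain P pol"
    using assms(1,5) by (rule policy_chain.intro)
  obtain c where c: "gain P r pol = (\<lambda>_. c)"
    using assms(6) by auto
  define h where "h = bias P r pol"
  define d where "d s = (1 - \<gamma>) * (\<Sum>t. \<gamma> ^ t * (markov_op (policy_matrix P pol) ^^ Suc t) h s)"
    for s
  have "disc_value P r pol \<gamma> s = c / (1 - \<gamma>) + h s - d s" for s
    using policy_chain.disc_value_eq[OF chain _ _ policy_chain.policy_mean_poisson[OF chain c]]
      assms(3,4)
    by (simp add: h_def d_def)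
  moreover have "d s \<in> {Min (range h)..Max (range h)}" for s
    unfolding d_def using assms(3,4) policy_chain.stochastic[OF chain]
    by (intro discounted_average_mem_Icc funpow_markov_op_mem_Icc) auto
  ultimately show ?thesis
    unfolding c h_def by (rule span_bounds_of_average_decomposition)
qed

end
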